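(* Let $p$ be an odd prime, $r,m$ positive integers and $s\in\{0,1,\dots,mp^{r-1}-1\}$. Then $$\binom{2sp+p-1}{sp+\frac{p-1}{2}}\binom{2(mp^{r-1}-s-1)p+p-1}{(mp^{r-1}-s-1)p+\frac{p-1}{2}}\equiv\binom{2s}{s}\binom{2(mp^{r-1}-s-1)}{mp^{r-1}-s-1}\pmod{p^r}.$$ *)

theory Defs
  imports "HOL-Number_Theory.Number_Theory"
begin

end

theory Submission
  imports Defs
begin

text \<open>
  Write \<open>Q(l,u)\<close> for the product of the integers in \<open>[l,u]\<close> not divisible by \<open>p\<close>, so that
  \<open>n! = p\<^bsup>\<lfloor>n/p\<rfloor>\<^esup> \<lfloor>n/p\<rfloor>! Q(1,n)\<close>. For \<open>a \<equiv> h (mod p)\<close> with \<open>2h < p\<close> this gives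
  \<open>binom(2a,a) Q(1,a)\<^sup>2 = binom(2s,s) Q(1,2a)\<close> with \<open>s = \<lfloor>a/p\<rfloor>\<close>, and as \<open>Q\<close> is a unit
  modulo \<open>p\<^sup>r\<close> the theorem reduces to \<open>Q(1,2a) Q(1,2b) \<equiv> Q(1,a)\<^sup>2 Q(1,b)\<^sup>2\<close>
  for \<open>a + b + 1 \<equiv> 0 (mod p\<^sup>r)\<close>. Shifting by \<open>a + b + 1\<close> moves \<open>[a+1,2a]\<close> and \<open>[b+1,2b]\<close>
  to intervals of negative numbers, whose products are \<open>\<plusminus>Q\<close> of positive intervals; when
  \<open>a \<equiv> b (mod p)\<close> the signs cancel and the pieces reassemble into \<open>Q(1,a) Q(1,b)\<close>.
\<close>

definition nonmult_prod :: "int \<Rightarrow> int \<Rightarrow> int \<Rightarrow> int" where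
  "nonmult_prod p l u = (\<Prod>k = l..u. if p dvd k then 1 else k)"

lemma nonmult_prod_split:
  assumes "l \<le> m + 1" "m \<le> u"
  shows "nonmult_prod p l u = nonmult_prod p l m * nonmult_prod p (m + 1) u"
proof -
  have "{l..u} = {l..m} \<union> {m + 1..u}" using assms by auto
  moreover have "{l..m} \<inter> {m + 1..u} = {}" by auto
  ultimately show ?thesis unfolding nonmult_prod_def by (simp add: prod.union_disjoint)
qed

lemma nonmult_prod_single: "nonmult_prod p k k = (if p dvd k then 1 else k)"
  by (simp add: nonmult_prod_def)

lemma nonmult_prod_extend_right:
  assumes "l \<le> u + 1"
  shows "nonmult_prod p l (u + 1) = nonmult_prod p l u * (if p dvd u + 1 then 1 else u + 1)"
  using nonmult_prod_split[of l u "u + 1" p] assms by (simp add: nonmult_prod_single)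

lemma nonmult_prod_extend_left:
  assumes "l \<le> u + 1"
  shows "nonmult_prod p (l - 1) u = (if p dvd l - 1 then 1 else l - 1) * nonmult_prod p l u"
  using nonmult_prod_split[of "l - 1" "l - 1" u p] assms by (simp add: nonmult_prod_single)

lemma nonmult_prod_Suc:
  fixes p n :: nat
  shows "nonmult_prod (int p) 1 (int (Suc n))
       = nonmult_prod (int p) 1 (int n) * (if p dvd Suc n then 1 else int (Suc n))"
proof -
  have "int n + 1 = int (Suc n)" by simp
  then show ?thesis using nonmult_prod_extend_right[of 1 "int n" "int p"] by (simp only: int_dvd_int_iff)
qed

lemma nonmult_prod_shift_cong:
  assumes "M dvd N" "p dvd N"
  shows "[nonmult_prod p (l - N) (u - N) = nonmult_prod p l u] (mod M)"
proof -
  have dvd_shift: "p dvd k - N \<longleftrightarrow> p dvd k" for k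
    using assms(2) dvd_add_left_iff[of p N "k - N"] by simp
  have "nonmult_prod p (l - N) (u - N) = (\<Prod>k = l..u. if p dvd k - N then 1 else k - N)"
    unfolding nonmult_prod_def
    by (rule prod.reindex_bij_witness[where i = "\<lambda>k. k - N" and j = "\<lambda>k. k + N"]) auto
  also have "[\<dots> = nonmult_prod p l u] (mod M)"
    unfolding nonmult_prod_def dvd_shift
    by (rule cong_prod) (use assms(1) in \<open>simp add: cong_iff_dvd_diff\<close>)
  finally show ?thesis .
qed

lemma nonmult_prod_upper_half_cong:
  assumes "M dvd a + b + 1" "p dvd a + b + 1"
  shows "[nonmult_prod p (a + 1) (2 * a) = nonmult_prod p (- b) (a - b - 1)] (mod M)"
  using nonmult_prod_shift_cong[OF assms, of "a + 1" "2 * a"] by (simp add: cong_sym_eq algebra_simps)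

lemma nonmult_prod_coprime:
  assumes "prime p"
  shows "coprime (nonmult_prod p l u) p"
  unfolding nonmult_prod_def
proof (rule prod_coprime_left)
  fix k
  show "coprime (if p dvd k then 1 else k) p"
    using prime_imp_coprime[OF assms, of k] by (simp add: coprime_commute)
qed

lemma nonmult_prod_across_zero:
  assumes "p dvd d" "0 \<le> a" "0 \<le> d"
  shows "nonmult_prod p (- a) (d - 1) = nonmult_prod p (- a) (-1) * nonmult_prod p 1 d"
proof -
  have "nonmult_prod p (- a) (d - 1 + 1) = nonmult_prod p (- a) (d - 1)"
    using nonmult_prod_extend_right[of "- a" "d - 1" p] assms by simp
  moreover have "nonmult_prod p (- a) d = nonmult_prod p (- a) (-1) * nonmult_prod p 0 d"
    using nonmult_prod_split[of "- a" "-1" d p] assms by simp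
  moreover have "nonmult_prod p (1 - 1) d = nonmult_prod p 1 d"
    using nonmult_prod_extend_left[of 1 d p] assms by simp
  ultimately show ?thesis by simp
qed

text \<open>The integers in \<open>[-u,-1]\<close> prime to \<open>p\<close> are \<open>u - \<lfloor>u/p\<rfloor>\<close> in number, which for odd \<open>p\<close>
  has the parity of \<open>u mod p\<close>.\<close>

lemma nonmult_prod_neg:
  fixes p u :: nat
  assumes "odd p"
  shows "nonmult_prod (int p) (- int u) (-1) = (-1) ^ (u mod p) * nonmult_prod (int p) 1 (int u)"
proof (induction u)
  case 0
  then show ?case by (simp add: nonmult_prod_def)
next
  case (Suc u)
  have p0: "p > 0" using assms by (intro odd_pos)
  have "- int u - 1 = - int (Suc u)" by simp
  then have left: "nonmult_prod (int p) (- int (Suc u)) (-1)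
      = (if p dvd Suc u then 1 else - int (Suc u)) * nonmult_prod (int p) (- int u) (-1)"
    using nonmult_prod_extend_left[of "- int u" "-1" "int p"] by (simp only: dvd_minus_iff int_dvd_int_iff)
  note right = nonmult_prod_Suc[of p u]
  show ?case
  proof (cases "p dvd Suc u")
    case True
    then have "u mod p = p - 1" "Suc u mod p = 0"
      using p0 by (auto simp: mod_Suc dvd_eq_mod_eq_0 split: if_splits)
    moreover have "even (p - 1)" using assms by simp
    ultimately show ?thesis using True left right Suc.IH by simp
  next
    case False
    then have "Suc u mod p = Suc (u mod p)"
      using p0 by (auto simp: mod_Suc dvd_eq_mod_eq_0)
    then show ?thesis using False left right Suc.IH by (simp add: algebra_simps)
  qed
qed

lemma fact_eq_nonmult_prod:
  fixes p n :: nat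
  assumes "p > 0"
  shows "(fact n :: int) = int p ^ (n div p) * fact (n div p) * nonmult_prod (int p) 1 (int n)"
proof (induction n)
  case 0
  then show ?case by (simp add: nonmult_prod_def)
next
  case (Suc n)
  note step = nonmult_prod_Suc[of p n]
  have "(fact (Suc n) :: int) = int (Suc n) * fact n" by (simp only: fact_Suc)
  also have "\<dots> = int (Suc n) * (int p ^ (n div p) * fact (n div p) * nonmult_prod (int p) 1 (int n))"
    by (simp only: Suc.IH)
  also have "\<dots> = int p ^ (Suc n div p) * fact (Suc n div p) * nonmult_prod (int p) 1 (int (Suc n))"
  proof (cases "p dvd Suc n")
    case True
    then have q: "Suc n div p = Suc (n div p)" using assms by (simp add: div_Suc dvd_eq_mod_eq_0)
    then have "int (Suc n) = int p * int (Suc (n div p))"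
      using True by (metis dvd_mult_div_cancel of_nat_mult)
    then show ?thesis unfolding q step using True by (simp only: fact_Suc power_Suc if_True mult_ac)
  next
    case False
    then have "Suc n div p = n div p" using assms by (simp add: div_Suc dvd_eq_mod_eq_0)
    then show ?thesis unfolding step using False by (simp only: if_False mult_ac)
  qed
  finally show ?case .
qed

lemma fact_double_eq: "(fact (2 * n) :: int) = fact n ^ 2 * int ((2 * n) choose n)"
  using binomial_fact_lemma[of n "2 * n"]
  by (metis mult_2 add_diff_cancel_left' le_add1 of_nat_fact of_nat_mult power2_eq_square)

lemma central_binomial_nonmult_prod:
  fixes p a :: nat
  assumes "p > 0" "2 * (a mod p) < p"
  shows "int ((2 * a) choose a) * nonmult_prod (int p) 1 (int a) ^ 2
       = int ((2 * (a div p)) choose (a div p)) * nonmult_prod (int p) 1 (int (2 * a))"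
proof -
  define s where "s = a div p"
  have "2 * a = 2 * (a mod p) + 2 * s * p"
    unfolding s_def mult.assoc using div_mult_mod_eq[of a p] by linarith
  then have double_div: "2 * a div p = 2 * s"
    using assms by simp
  define K :: int where "K = (int p ^ s * fact s) ^ 2"
  have "int ((2 * a) choose a) * nonmult_prod (int p) 1 (int a) ^ 2 * K = fact (2 * a)"
    unfolding fact_double_eq[of a] fact_eq_nonmult_prod[OF assms(1), of a] K_def s_def
    by (simp only: power_mult_distrib mult_ac)
  also have "\<dots> = int ((2 * s) choose s) * nonmult_prod (int p) 1 (int (2 * a)) * K"
    unfolding fact_eq_nonmult_prod[OF assms(1), of "2 * a"] double_div fact_double_eq[of s] K_def
    by (simp only: power_mult_distrib power_mult power2_eq_square mult_ac)
  moreover have "K \<noteq> 0" using assms(1) unfolding K_def by simp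
  ultimately show ?thesis unfolding s_def by simp
qed

lemma nonmult_prod_double_cong_ordered:
  fixes p r a b :: nat
  assumes p: "prime p" "odd p" and r: "r \<ge> 1" and dvd_sum: "p ^ r dvd a + b + 1"
    and ab: "[a = b] (mod p)" "a \<le> b"
  shows "[nonmult_prod (int p) 1 (int (2 * a)) * nonmult_prod (int p) 1 (int (2 * b))
        = nonmult_prod (int p) 1 (int a) ^ 2 * nonmult_prod (int p) 1 (int b) ^ 2] (mod int (p ^ r))"
proof -
  let ?Q = "nonmult_prod (int p)"
  define A B D where "A = int a" and "B = int b" and "D = int (b - a)"
  have B_eq: "B = A + D" and A_nonneg: "A \<ge> 0" and D_nonneg: "D \<ge> 0"
    using ab(2) unfolding A_def B_def D_def by simp_all
  have "p dvd b - a" using ab cong_altdef_nat[of a b p] by (simp add: cong_sym_eq)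
  then have pD: "int p dvd D" and "(b - a) mod p = 0" unfolding D_def by simp_all
  have MN: "int (p ^ r) dvd A + B + 1"
    unfolding A_def B_def using dvd_sum by (metis int_dvd_int_iff of_nat_add of_nat_1)
  moreover have "int p dvd int (p ^ r)" using r by (simp add: dvd_power)
  ultimately have pN: "int p dvd A + B + 1" by (rule dvd_trans[rotated])
  have shift_a: "[?Q (A + 1) (2 * A) = ?Q (- B) (- D - 1)] (mod int (p ^ r))"
    using nonmult_prod_upper_half_cong[OF MN pN] unfolding B_eq by (simp add: algebra_simps)
  have shift_b: "[?Q (B + 1) (2 * B) = ?Q (- A) (D - 1)] (mod int (p ^ r))"
    using nonmult_prod_upper_half_cong[of "int (p ^ r)" B A] MN pN unfolding B_eq
    by (simp add: algebra_simps)
  have neg_B: "?Q (- B) (-1) = ?Q (- B) (- D - 1) * ?Q (- D) (-1)"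
    using nonmult_prod_split[of "- B" "- D - 1" "-1"] B_eq A_nonneg D_nonneg by simp
  note across_zero = nonmult_prod_across_zero[OF pD A_nonneg D_nonneg]
  define \<epsilon> :: int where "\<epsilon> = (-1) ^ (a mod p)"
  have sign_A: "?Q (- A) (-1) = \<epsilon> * ?Q 1 A"
    unfolding A_def \<epsilon>_def using nonmult_prod_neg[OF p(2)] .
  have sign_B: "?Q (- B) (-1) = \<epsilon> * ?Q 1 B"
    unfolding B_def \<epsilon>_def using nonmult_prod_neg[OF p(2), of b] ab(1) by (simp add: cong_def)
  have sign_D: "?Q (- D) (-1) = ?Q 1 D"
    unfolding D_def using nonmult_prod_neg[OF p(2), of "b - a"] \<open>(b - a) mod p = 0\<close> by simp
  have "\<epsilon> * \<epsilon> = 1" unfolding \<epsilon>_def by (simp flip: power_add)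
  \<comment> \<open>The extra factor \<open>Q(1,D) = Q(-D,-1)\<close> completes the shifted blocks to \<open>Q(-B,-1)\<close> and \<open>Q(-A,-1)\<close>.\<close>
  have "?Q 1 (2 * A) * ?Q 1 (2 * B) * ?Q 1 D
      = ?Q 1 A * ?Q 1 B * (?Q (A + 1) (2 * A) * ?Q (B + 1) (2 * B)) * ?Q 1 D"
    using nonmult_prod_split[of 1 A "2 * A"] nonmult_prod_split[of 1 B "2 * B"] B_eq D_nonneg
    unfolding A_def by (simp add: mult_ac)
  also have "[\<dots> = ?Q 1 A * ?Q 1 B * (?Q (- B) (- D - 1) * ?Q (- A) (D - 1)) * ?Q 1 D] (mod int (p ^ r))"
    by (intro cong_mult cong_refl shift_a shift_b)
  also have "?Q 1 A * ?Q 1 B * (?Q (- B) (- D - 1) * ?Q (- A) (D - 1)) * ?Q 1 D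
      = ?Q 1 A * ?Q 1 B * ?Q (- B) (-1) * ?Q (- A) (-1) * ?Q 1 D"
    unfolding neg_B across_zero sign_D by (simp only: mult_ac)
  also have "\<dots> = (\<epsilon> * \<epsilon>) * (?Q 1 A ^ 2 * ?Q 1 B ^ 2) * ?Q 1 D"
    unfolding sign_A sign_B by (simp only: power2_eq_square mult_ac)
  also have "\<dots> = ?Q 1 A ^ 2 * ?Q 1 B ^ 2 * ?Q 1 D"
    using \<open>\<epsilon> * \<epsilon> = 1\<close> by simp
  finally have "[?Q 1 (2 * A) * ?Q 1 (2 * B) * ?Q 1 D = ?Q 1 A ^ 2 * ?Q 1 B ^ 2 * ?Q 1 D] (mod int (p ^ r))" .
  moreover have "coprime (?Q 1 D) (int (p ^ r))"
    using nonmult_prod_coprime[of "int p"] p(1) by simp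
  ultimately show ?thesis
    unfolding A_def B_def by (simp add: cong_mult_rcancel)
qed

lemma nonmult_prod_double_cong:
  fixes p r a b :: nat
  assumes "prime p" "odd p" "r \<ge> 1" "p ^ r dvd a + b + 1" "[a = b] (mod p)"
  shows "[nonmult_prod (int p) 1 (int (2 * a)) * nonmult_prod (int p) 1 (int (2 * b))
        = nonmult_prod (int p) 1 (int a) ^ 2 * nonmult_prod (int p) 1 (int b) ^ 2] (mod int (p ^ r))"
proof (cases "a \<le> b")
  case True
  then show ?thesis using nonmult_prod_double_cong_ordered[OF assms] by simp
next
  case False
  have "p ^ r dvd b + a + 1" "[b = a] (mod p)" using assms(4,5) by (simp_all add: add.commute cong_sym_eq)
  from nonmult_prod_double_cong_ordered[OF assms(1-3) this] False show ?thesis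
    by (simp add: ac_simps)
qed

lemma double_mod_less_modulus:
  fixes p a b :: nat
  assumes "p > 0" "p dvd a + b + 1" "[a = b] (mod p)"
  shows "2 * (a mod p) < p"
proof -
  have "[a + b + 1 = 2 * (a mod p) + 1] (mod p)"
    unfolding mult_2 using assms(3) by (intro cong_add cong_refl) (auto simp: cong_def)
  then have "p dvd 2 * (a mod p) + 1" using assms(2) cong_dvd_iff by blast
  then obtain k where k: "2 * (a mod p) + 1 = p * k" by blast
  have "p * k < p * 2" using k mod_less_divisor[OF assms(1), of a] by linarith
  then have "k = 1" using k by (cases k) auto
  then show ?thesis using k by simp
qed

lemma central_binomial_prod_cong:
  fixes p r a b :: nat
  assumes "prime p" "odd p" "r \<ge> 1" "p ^ r dvd a + b + 1" "[a = b] (mod p)"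
  shows "[((2 * a) choose a) * ((2 * b) choose b)
        = ((2 * (a div p)) choose (a div p)) * ((2 * (b div p)) choose (b div p))] (mod p ^ r)"
proof -
  let ?q = "\<lambda>x. nonmult_prod (int p) 1 (int x)"
  have p0: "p > 0" using assms(1) prime_gt_0_nat by blast
  have "p dvd p ^ r" using assms(3) by (simp add: dvd_power)
  then have pN: "p dvd a + b + 1" using assms(4) by (rule dvd_trans)
  have half: "2 * (a mod p) < p" "2 * (b mod p) < p"
    using double_mod_less_modulus[OF p0 pN assms(5)] double_mod_less_modulus[OF p0 _ cong_sym[OF assms(5)]] pN
    by (simp_all add: add.commute)
  define X where "X = int (((2 * a) choose a) * ((2 * b) choose b))"
  define Y where "Y = int (((2 * (a div p)) choose (a div p)) * ((2 * (b div p)) choose (b div p)))"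
  define U where "U = ?q a ^ 2 * ?q b ^ 2"
  have "X * U = Y * (?q (2 * a) * ?q (2 * b))"
    using central_binomial_nonmult_prod[OF p0 half(1)] central_binomial_nonmult_prod[OF p0 half(2)]
    unfolding X_def Y_def U_def by (simp add: mult_ac)
  also have "[\<dots> = Y * U] (mod int (p ^ r))"
    unfolding U_def by (rule cong_mult[OF cong_refl nonmult_prod_double_cong[OF assms]])
  finally have "[X * U = Y * U] (mod int (p ^ r))" .
  moreover have "coprime U (int (p ^ r))"
    using nonmult_prod_coprime[of "int p"] assms(1) unfolding U_def by simp
  ultimately have "[X = Y] (mod int (p ^ r))" by (simp add: cong_mult_rcancel)
  then show ?thesis unfolding X_def Y_def by (simp only: cong_int_iff)
qed

theorem lemma2p13:
  fixes p r m s :: nat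
  assumes "prime p" and "odd p" and "r \<ge> 1" and "m \<ge> 1"
    and "s < m * p ^ (r - 1)"
  shows "[((2*s*p + p - 1) choose (s*p + (p - 1) div 2)) *
          ((2*(m * p ^ (r - 1) - s - 1)*p + p - 1) choose ((m * p ^ (r - 1) - s - 1)*p + (p - 1) div 2))
        = ((2*s) choose s) * ((2*(m * p ^ (r - 1) - s - 1)) choose (m * p ^ (r - 1) - s - 1))] (mod p ^ r)"
proof -
  define t where "t = m * p ^ (r - 1) - s - 1"
  define h where "h = (p - 1) div 2"
  define a b where "a = s * p + h" and "b = t * p + h"
  have p_eq: "p = 2 * h + 1" unfolding h_def using assms(2) by simp
  have "h < p" using p_eq by simp
  then have div_mod: "a div p = s" "b div p = t" "a mod p = b mod p"
    unfolding a_def b_def by (simp_all add: add.commute[of _ h])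
  have "s + t + 1 = m * p ^ (r - 1)" unfolding t_def using assms(5) by simp
  moreover have "a + b + 1 = (s + t + 1) * p"
    unfolding a_def b_def using p_eq by (simp add: algebra_simps)
  ultimately have "a + b + 1 = m * (p * p ^ (r - 1))" by (simp add: mult_ac)
  then have dvd: "p ^ r dvd a + b + 1"
    using assms(3) by (simp add: power_eq_if split: if_splits)
  have "[a = b] (mod p)" using div_mod(3) by (simp only: cong_def)
  from central_binomial_prod_cong[OF assms(1-3) dvd this]
  have "[((2 * a) choose a) * ((2 * b) choose b) = ((2 * s) choose s) * ((2 * t) choose t)] (mod p ^ r)"
    unfolding div_mod(1,2) .
  moreover have "2 * x * p + p - 1 = 2 * (x * p + h)" "x * p + (p - 1) div 2 = x * p + h" for x
    using p_eq unfolding h_def by simp_all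
  ultimately show ?thesis unfolding t_def[symmetric] a_def b_def by (simp only: mult.assoc)
qed

end
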